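(* Let $\Gamma$ be a finite connected graph with vertex set $V$, and let $Y\subset Z\subset V$ with $Z\neq\emptyset$. Let $s:V\to\mathbb{Z}_{\ge0}$. Let $H_w(s,Y)$ be the expected number of particles stopping in $Y$ when $s(x)$ particles start at each vertex $x$ and perform independent simple random walks on $\Gamma$, each stopped on first hitting $Z$. Let $H_r(s,Y)$ be the number of particles stopping in $Y$ when $s(x)$ particles start at each vertex $x$ and perform rotor-router walks on $\Gamma$, each stopped on first hitting $Z$ (particles moved one step at a time in any order until all lie in $Z$). Let $H(x)=H_w(\mathbf{1}_{x},Y)$ be the probability that simple random walk from $x$ stopped on hitting $Z$ stops in $Y$. Then \[ |H_r(s,Y)-H_w(s,Y)|\le\sum_{u\in V\setminus Z}\ \sum_{v\sim u}|H(u)-H(v)|, \] regardless of $s$, of the initial rotor configuration, and of the order of moves.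
   Context: Rotor-router walk on a graph: each vertex $u$ has a fixed cyclic ordering of its neighbors and a rotor pointing to one of them (initial positions arbitrary). A particle at $u$ (with $u\notin Z$) advances the rotor at $u$ to the next neighbor in the cyclic order and moves to that neighbor. Particles at vertices of $Z$ do not move. Simple random walk moves from $u$ to a uniformly random neighbor. $\mathbf{1}_x$ is the indicator function of $\{x\}$. *)

theory Defs
  imports Complex_Main
begin

definition nbrs :: "('a \<Rightarrow> 'a \<Rightarrow> bool) \<Rightarrow> 'a \<Rightarrow> 'a set" where
  "nbrs adj u = {v. adj u v}"

definition finite_connected_graph :: "('a::finite \<Rightarrow> 'a \<Rightarrow> bool) \<Rightarrow> bool" where
  "finite_connected_graph adj \<longleftrightarrow>
     (\<forall>x y. adj x y \<longrightarrow> adj y x) \<and> (\<forall>x. \<not> adj x x) \<and> (\<forall>x y. adj\<^sup>*\<^sup>* x y)"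

text \<open>nxt u is a cyclic ordering of the neighbours of u: a map of N(u) into itself
  under which every neighbour is reached from every other one (a single cycle).\<close>
definition cyclic_orders :: "('a \<Rightarrow> 'a \<Rightarrow> bool) \<Rightarrow> ('a \<Rightarrow> 'a \<Rightarrow> 'a) \<Rightarrow> bool" where
  "cyclic_orders adj nxt \<longleftrightarrow>
     (\<forall>u. \<forall>v \<in> nbrs adj u. nxt u v \<in> nbrs adj u \<and>
          (\<forall>w \<in> nbrs adj u. \<exists>k. (nxt u ^^ k) v = w))"

text \<open>Probability that simple random walk started at x, stopped on first hitting Z,
  has stopped in Y within n steps.\<close>
fun hit_within :: "('a::finite \<Rightarrow> 'a \<Rightarrow> bool) \<Rightarrow> 'a set \<Rightarrow> 'a set \<Rightarrow> nat \<Rightarrow> 'a \<Rightarrow> real" where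
  "hit_within adj Z Y 0 x = (if x \<in> Y then 1 else 0)"
| "hit_within adj Z Y (Suc n) x =
     (if x \<in> Z then (if x \<in> Y then 1 else 0)
      else (\<Sum>v\<in>nbrs adj x. hit_within adj Z Y n v) / real (card (nbrs adj x)))"

text \<open>H(x): probability that SRW from x stopped on hitting Z stops in Y
  (increasing limit of the finite-horizon probabilities).\<close>
definition hit_prob :: "('a::finite \<Rightarrow> 'a \<Rightarrow> bool) \<Rightarrow> 'a set \<Rightarrow> 'a set \<Rightarrow> 'a \<Rightarrow> real" where
  "hit_prob adj Z Y x = (SUP n. hit_within adj Z Y n x)"

text \<open>H_w(s,Y): expected number of particles stopping in Y (by linearity of expectation).\<close>
definition H_walk :: "('a::finite \<Rightarrow> 'a \<Rightarrow> bool) \<Rightarrow> 'a set \<Rightarrow> ('a \<Rightarrow> nat) \<Rightarrow> 'a set \<Rightarrow> real" where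
  "H_walk adj Z s Y = (\<Sum>x\<in>UNIV. real (s x) * hit_prob adj Z Y x)"

text \<open>One rotor-router move: a particle at u \<notin> Z advances the rotor at u and moves there.
  A configuration is (rotor, particle counts).\<close>
definition rotor_step ::
  "('a \<Rightarrow> 'a \<Rightarrow> 'a) \<Rightarrow> 'a set \<Rightarrow> ('a \<Rightarrow> 'a) \<times> ('a \<Rightarrow> nat) \<Rightarrow> ('a \<Rightarrow> 'a) \<times> ('a \<Rightarrow> nat) \<Rightarrow> bool" where
  "rotor_step nxt Z c c' \<longleftrightarrow>
     (\<exists>u. u \<notin> Z \<and> snd c u > 0 \<and>
        (let w = nxt u (fst c u); \<sigma>1 = (snd c)(u := snd c u - 1) in
         c' = ((fst c)(u := w), \<sigma>1(w := \<sigma>1 w + 1))))"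

end

theory Submission
  imports Defs
begin

text \<open>Let \<open>H = hit_prob adj Z Y\<close>. Every move of a particle from \<open>u \<notin> Z\<close> to \<open>w\<close> changes the
  \<open>H\<close>-weighted particle count by \<open>H w - H u\<close>; the initial weighted count is \<open>H_walk\<close> and the
  final one is the number of particles in \<open>Y\<close>. So the discrepancy is a sum over \<open>u \<notin> Z\<close> of
  partial sums of \<open>H v - H u\<close> along the rotor cycle at \<open>u\<close>. Since \<open>H\<close> is harmonic at \<open>u\<close>,
  every full turn of the rotor contributes zero, and what remains is at most one partial turn,
  bounded by \<open>\<Sum>v\<sim>u. \<bar>H u - H v\<bar>\<close>.\<close>

lemma funpow_orbit_bij_betw:
  assumes fin: "finite N" and b: "b \<in> N" and maps: "f ` N \<subseteq> N"
    and reach: "\<And>w. w \<in> N \<Longrightarrow> \<exists>k. (f ^^ k) b = w"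
  shows "bij_betw (\<lambda>i. (f ^^ i) b) {..<card N} N"
proof -
  define p where "p = card N"
  have orbit_in: "(f ^^ i) b \<in> N" for i
    using b maps by (induction i) auto
  have "\<not> inj_on (\<lambda>i. (f ^^ i) b) {..p}"
    using card_inj_on_le[of "\<lambda>i. (f ^^ i) b" "{..p}" N] orbit_in fin p_def by auto
  then obtain i j where ij: "i < j" "j \<le> p" "(f ^^ i) b = (f ^^ j) b"
    unfolding inj_on_def by (metis atMost_iff linorder_neqE_nat)
  have early: "\<exists>l<j. (f ^^ k) b = (f ^^ l) b" for k
  proof (induction k rule: less_induct)
    case (less k)
    show ?case
    proof (cases "k < j")
      case False
      then have "(f ^^ k) b = (f ^^ (k - j)) ((f ^^ j) b)"
        by (metis funpow_add le_add_diff_inverse2 not_less o_apply)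
      also have "\<dots> = (f ^^ (k - j + i)) b"
        using ij by (simp add: funpow_add)
      finally show ?thesis
        using less[of "k - j + i"] ij False by auto
    qed blast
  qed
  have img: "(\<lambda>i. (f ^^ i) b) ` {..<p} = N"
  proof
    show "N \<subseteq> (\<lambda>i. (f ^^ i) b) ` {..<p}"
      using reach early ij by (fastforce simp: image_iff)
  qed (use orbit_in in auto)
  then have "inj_on (\<lambda>i. (f ^^ i) b) {..<p}"
    by (intro eq_card_imp_inj_on) (simp_all add: p_def)
  with img show ?thesis
    unfolding bij_betw_def p_def by simp
qed

lemma sum_lessThan_add:
  "(\<Sum>i<k + n. h i) = (\<Sum>i<k. h i) + (\<Sum>i<n. h (k + i))" for h :: "nat \<Rightarrow> 'b::comm_monoid_add"
  by (induction n) (simp_all add: add.assoc)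

lemma abs_sum_funpow_cycle_le:
  fixes g :: "'a \<Rightarrow> real"
  assumes fin: "finite N" and maps: "f ` N \<subseteq> N"
    and cyclic: "\<And>v w. v \<in> N \<Longrightarrow> w \<in> N \<Longrightarrow> \<exists>k. (f ^^ k) v = w"
    and zero_sum: "(\<Sum>v\<in>N. g v) = 0" and b: "b \<in> N"
  shows "\<bar>\<Sum>i<m. g ((f ^^ i) b)\<bar> \<le> (\<Sum>v\<in>N. \<bar>g v\<bar>)"
  using b
proof (induction m arbitrary: b rule: less_induct)
  case (less m)
  define p where "p = card N"
  have orbit: "bij_betw (\<lambda>i. (f ^^ i) c) {..<p} N" if "c \<in> N" for c
    unfolding p_def using fin that maps cyclic[OF that] by (rule funpow_orbit_bij_betw)
  have orbit_in: "(f ^^ i) c \<in> N" if "c \<in> N" for i c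
    using that maps by (induction i) auto
  show ?case
  proof (cases "m \<le> p")
    case True
    have "\<bar>\<Sum>i<m. g ((f ^^ i) b)\<bar> \<le> (\<Sum>i<m. \<bar>g ((f ^^ i) b)\<bar>)"
      by (rule sum_abs)
    also have "\<dots> \<le> (\<Sum>i<p. \<bar>g ((f ^^ i) b)\<bar>)"
      using True by (intro sum_mono2) auto
    also have "\<dots> = (\<Sum>v\<in>N. \<bar>g v\<bar>)"
      using sum.reindex_bij_betw[OF orbit[OF less.prems]] .
    finally show ?thesis .
  next
    case False
    have turn: "(\<Sum>i<p. g ((f ^^ i) b)) = 0"
      using sum.reindex_bij_betw[OF orbit[OF less.prems], of g] zero_sum by simp
    have "(\<Sum>i<m. g ((f ^^ i) b)) = (\<Sum>i<p + (m - p). g ((f ^^ i) b))"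
      using False by simp
    also have "\<dots> = (\<Sum>i<m - p. g ((f ^^ (i + p)) b))"
      unfolding sum_lessThan_add turn by (simp add: add.commute)
    also have "\<dots> = (\<Sum>i<m - p. g ((f ^^ i) ((f ^^ p) b)))"
      by (simp add: funpow_add)
    finally have shift: "(\<Sum>i<m. g ((f ^^ i) b)) = (\<Sum>i<m - p. g ((f ^^ i) ((f ^^ p) b)))" .
    have "p > 0"
      using less.prems fin p_def card_gt_0_iff by blast
    then have "m - p < m"
      using False by simp
    from less.IH[OF this orbit_in[OF less.prems]] show ?thesis
      unfolding shift .
  qed
qed

lemma connected_graph_nbrs_nonempty:
  assumes "finite_connected_graph adj" and "u \<noteq> z"
  shows "nbrs adj u \<noteq> {}"
proof -
  have "adj\<^sup>*\<^sup>* u z"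
    using assms(1) unfolding finite_connected_graph_def by blast
  with assms(2) obtain v where "adj u v"
    by (metis converse_rtranclpE)
  then show ?thesis
    by (auto simp: nbrs_def)
qed

lemma hit_within_in_Z: "x \<in> Z \<Longrightarrow> hit_within adj Z Y n x = (if x \<in> Y then 1 else 0)"
  by (cases n) auto

lemma hit_within_bounds: "0 \<le> hit_within adj Z Y n x \<and> hit_within adj Z Y n x \<le> 1"
proof (induction n arbitrary: x)
  case (Suc n)
  let ?S = "\<Sum>v\<in>nbrs adj x. hit_within adj Z Y n v"
  have "0 \<le> ?S" and "?S \<le> real (card (nbrs adj x))"
    using Suc sum_mono[of "nbrs adj x" "hit_within adj Z Y n" "\<lambda>_. 1"] by (auto intro: sum_nonneg)
  then show ?case
    by (cases "card (nbrs adj x) = 0") (auto simp: divide_le_eq_1)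
qed simp

lemma incseq_hit_within:
  assumes "Y \<subseteq> Z"
  shows "incseq (\<lambda>n. hit_within adj Z Y n x)"
proof (rule incseq_SucI)
  show "hit_within adj Z Y n x \<le> hit_within adj Z Y (Suc n) x" for n
  proof (induction n arbitrary: x)
    case 0
    show ?case
      using assms hit_within_bounds[of adj Z Y "Suc 0" x] by auto
  next
    case (Suc n)
    have "(\<Sum>v\<in>nbrs adj x. hit_within adj Z Y n v) \<le> (\<Sum>v\<in>nbrs adj x. hit_within adj Z Y (Suc n) v)"
      by (intro sum_mono Suc)
    then show ?case
      by (auto intro: divide_right_mono)
  qed
qed

lemma hit_within_tendsto_hit_prob:
  assumes "Y \<subseteq> Z"
  shows "(\<lambda>n. hit_within adj Z Y n x) \<longlonglongrightarrow> hit_prob adj Z Y x"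
  unfolding hit_prob_def
proof (rule LIMSEQ_incseq_SUP)
  show "bdd_above (range (\<lambda>n. hit_within adj Z Y n x))"
    using hit_within_bounds by (intro bdd_aboveI[of _ 1]) blast
  show "incseq (\<lambda>n. hit_within adj Z Y n x)"
    using assms by (rule incseq_hit_within)
qed

lemma hit_prob_in_Z: "x \<in> Z \<Longrightarrow> hit_prob adj Z Y x = (if x \<in> Y then 1 else 0)"
  unfolding hit_prob_def by (simp add: hit_within_in_Z)

lemma hit_prob_harmonic:
  assumes "Y \<subseteq> Z" and "x \<notin> Z"
  shows "hit_prob adj Z Y x = (\<Sum>v\<in>nbrs adj x. hit_prob adj Z Y v) / real (card (nbrs adj x))"
proof (rule LIMSEQ_unique)
  show "(\<lambda>n. hit_within adj Z Y (Suc n) x) \<longlonglongrightarrow> hit_prob adj Z Y x"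
    using hit_within_tendsto_hit_prob[OF assms(1)] by (rule LIMSEQ_Suc)
  show "(\<lambda>n. hit_within adj Z Y (Suc n) x) \<longlonglongrightarrow>
      (\<Sum>v\<in>nbrs adj x. hit_prob adj Z Y v) / real (card (nbrs adj x))"
    using assms(2) unfolding hit_within.simps(2) divide_inverse
    by (simp only: if_False) (intro tendsto_mult_right tendsto_sum hit_within_tendsto_hit_prob[OF assms(1)])
qed

definition weighted_count :: "('a::finite \<Rightarrow> real) \<Rightarrow> ('a \<Rightarrow> nat) \<Rightarrow> real" where
  "weighted_count H \<sigma> = (\<Sum>x\<in>UNIV. real (\<sigma> x) * H x)"

text \<open>The change of the weighted count caused by the first \<open>k\<close> departures from \<open>u\<close>: the
  \<open>i\<close>-th departure (counting from 0) goes to the \<open>(i+1)\<close>-st successor of the initial rotor \<open>\<rho>0 u\<close>.\<close>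

definition rotor_error :: "('a \<Rightarrow> 'a \<Rightarrow> 'a) \<Rightarrow> ('a \<Rightarrow> real) \<Rightarrow> ('a \<Rightarrow> 'a) \<Rightarrow> 'a \<Rightarrow> nat \<Rightarrow> real" where
  "rotor_error nxt H \<rho>0 u k = (\<Sum>i<k. H ((nxt u ^^ i) (nxt u (\<rho>0 u))) - H u)"

lemma sum_fun_upd:
  fixes f :: "'a \<Rightarrow> 'b::ab_group_add"
  assumes "finite A" and "a \<in> A"
  shows "(\<Sum>x\<in>A. (f(a := c)) x) = (\<Sum>x\<in>A. f x) + (c - f a)"
  using sum.remove[OF assms, of "f(a := c)"] sum.remove[OF assms, of f]
  by (simp add: sum.cong[of "A - {a}" _ "f(a := c)" f])

lemma weighted_count_fun_upd:
  "weighted_count H (\<sigma>(a := n)) = weighted_count H \<sigma> + (real n - real (\<sigma> a)) * H a"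
proof -
  have "weighted_count H (\<sigma>(a := n)) = (\<Sum>x\<in>UNIV. ((\<lambda>x. real (\<sigma> x) * H x)(a := real n * H a)) x)"
    unfolding weighted_count_def by (intro sum.cong) auto
  also have "\<dots> = weighted_count H \<sigma> + (real n * H a - real (\<sigma> a) * H a)"
    unfolding weighted_count_def by (rule sum_fun_upd) auto
  finally show ?thesis
    by (simp add: algebra_simps)
qed

lemma weighted_count_move:
  assumes "\<sigma> u > 0"
  shows "weighted_count H ((\<sigma>(u := \<sigma> u - 1))(w := (\<sigma>(u := \<sigma> u - 1)) w + 1))
    = weighted_count H \<sigma> + (H w - H u)"
proof -
  have "weighted_count H (\<sigma>(u := \<sigma> u - 1)) = weighted_count H \<sigma> - H u"
    using assms by (simp add: weighted_count_fun_upd of_nat_diff Suc_le_eq algebra_simps)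
  then show ?thesis
    unfolding weighted_count_fun_upd[of H "\<sigma>(u := \<sigma> u - 1)" w] by simp
qed

lemma sum_rotor_error_Suc:
  fixes Z :: "'a::finite set"
  assumes "u \<notin> Z"
  shows "(\<Sum>v\<in>UNIV - Z. rotor_error nxt H \<rho>0 v ((m(u := Suc (m u))) v))
    = (\<Sum>v\<in>UNIV - Z. rotor_error nxt H \<rho>0 v (m v)) + (H ((nxt u ^^ m u) (nxt u (\<rho>0 u))) - H u)"
proof -
  have "(\<Sum>v\<in>UNIV - Z. rotor_error nxt H \<rho>0 v ((m(u := Suc (m u))) v))
      = (\<Sum>v\<in>UNIV - Z. ((\<lambda>v. rotor_error nxt H \<rho>0 v (m v))(u := rotor_error nxt H \<rho>0 u (Suc (m u)))) v)"
    by (intro sum.cong) auto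
  also have "\<dots> = (\<Sum>v\<in>UNIV - Z. rotor_error nxt H \<rho>0 v (m v))
      + (rotor_error nxt H \<rho>0 u (Suc (m u)) - rotor_error nxt H \<rho>0 u (m u))"
    by (rule sum_fun_upd) (use assms in auto)
  finally show ?thesis
    by (simp add: rotor_error_def)
qed

text \<open>The invariant of a rotor-router run: \<open>m u\<close> counts the departures from \<open>u\<close>.\<close>

lemma rotor_run_weighted_count:
  assumes "(rotor_step nxt Z)\<^sup>*\<^sup>* (\<rho>0, s) c"
  shows "\<exists>m. (\<forall>u. u \<notin> Z \<longrightarrow> fst c u = (nxt u ^^ m u) (\<rho>0 u)) \<and>
     weighted_count H (snd c) = weighted_count H s + (\<Sum>u\<in>UNIV - Z. rotor_error nxt H \<rho>0 u (m u))"
  using assms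
proof (induction rule: rtranclp_induct)
  case base
  show ?case
    by (intro exI[of _ "\<lambda>_. 0"]) (simp add: rotor_error_def)
next
  case (step c c')
  obtain m where rotors: "\<forall>u. u \<notin> Z \<longrightarrow> fst c u = (nxt u ^^ m u) (\<rho>0 u)"
    and count: "weighted_count H (snd c) = weighted_count H s + (\<Sum>u\<in>UNIV - Z. rotor_error nxt H \<rho>0 u (m u))"
    using step.IH by blast
  obtain \<rho> \<sigma> where c: "c = (\<rho>, \<sigma>)"
    by (cases c)
  from step.hyps(2) obtain u where u: "u \<notin> Z" "\<sigma> u > 0"
    and c': "c' = (\<rho>(u := nxt u (\<rho> u)),
                   (\<sigma>(u := \<sigma> u - 1))(nxt u (\<rho> u) := (\<sigma>(u := \<sigma> u - 1)) (nxt u (\<rho> u)) + 1))"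
    unfolding rotor_step_def c Let_def by auto
  have target: "nxt u (\<rho> u) = (nxt u ^^ m u) (nxt u (\<rho>0 u))"
    using rotors u c by (simp add: funpow_swap1)
  show ?case
  proof (intro exI[of _ "m(u := Suc (m u))"] conjI allI impI)
    fix v
    show "fst c' v = (nxt v ^^ (m(u := Suc (m u))) v) (\<rho>0 v)" if "v \<notin> Z"
      using rotors that c by (cases "v = u") (simp_all add: c')
    show "weighted_count H (snd c')
        = weighted_count H s + (\<Sum>v\<in>UNIV - Z. rotor_error nxt H \<rho>0 v ((m(u := Suc (m u))) v))"
      using count c target
      unfolding c' snd_conv weighted_count_move[where \<sigma> = \<sigma> and u = u, OF u(2)]
        sum_rotor_error_Suc[OF u(1)]
      by simp
  qed
qed

lemma abs_rotor_error_le: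
  fixes H :: "'a::finite \<Rightarrow> real"
  assumes cyc: "cyclic_orders adj nxt" and rotor: "\<rho>0 u \<in> nbrs adj u"
    and harmonic: "H u = (\<Sum>v\<in>nbrs adj u. H v) / real (card (nbrs adj u))"
  shows "\<bar>rotor_error nxt H \<rho>0 u k\<bar> \<le> (\<Sum>v\<in>nbrs adj u. \<bar>H u - H v\<bar>)"
proof -
  have "card (nbrs adj u) \<noteq> 0"
    using rotor by (auto simp: card_eq_0_iff)
  with harmonic have "(\<Sum>v\<in>nbrs adj u. H v - H u) = 0"
    by (simp add: sum_subtractf field_simps)
  moreover have "nxt u ` nbrs adj u \<subseteq> nbrs adj u"
    and "\<And>v w. v \<in> nbrs adj u \<Longrightarrow> w \<in> nbrs adj u \<Longrightarrow> \<exists>k. (nxt u ^^ k) v = w"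
    and "nxt u (\<rho>0 u) \<in> nbrs adj u"
    using cyc rotor unfolding cyclic_orders_def by blast+
  ultimately have "\<bar>\<Sum>i<k. H ((nxt u ^^ i) (nxt u (\<rho>0 u))) - H u\<bar> \<le> (\<Sum>v\<in>nbrs adj u. \<bar>H v - H u\<bar>)"
    by (intro abs_sum_funpow_cycle_le[where g = "\<lambda>v. H v - H u"]) auto
  then show ?thesis
    unfolding rotor_error_def by (simp add: abs_minus_commute)
qed

lemma weighted_count_hit_prob_absorbed:
  assumes "\<forall>x. x \<notin> Z \<longrightarrow> \<sigma> x = 0"
  shows "weighted_count (hit_prob adj Z Y) \<sigma> = real (\<Sum>y\<in>Y. \<sigma> y)"
proof -
  have "weighted_count (hit_prob adj Z Y) \<sigma> = (\<Sum>x\<in>UNIV. if x \<in> Y then real (\<sigma> x) else 0)"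
    unfolding weighted_count_def
  proof (intro sum.cong refl)
    fix x
    show "real (\<sigma> x) * hit_prob adj Z Y x = (if x \<in> Y then real (\<sigma> x) else 0)"
      using assms hit_prob_in_Z[of x Z adj Y] by (cases "x \<in> Z") simp_all
  qed
  also have "\<dots> = (\<Sum>x\<in>Y. real (\<sigma> x))"
    by (simp add: sum.If_cases)
  finally show ?thesis
    by simp
qed

lemma abs_sum_rotor_error_le:
  assumes graph: "finite_connected_graph adj" and "Y \<subseteq> Z" and "Z \<noteq> {}"
    and "cyclic_orders adj nxt" and rotors: "\<forall>u. nbrs adj u \<noteq> {} \<longrightarrow> \<rho>0 u \<in> nbrs adj u"
  shows "\<bar>\<Sum>u\<in>UNIV - Z. rotor_error nxt (hit_prob adj Z Y) \<rho>0 u (m u)\<bar>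
    \<le> (\<Sum>u\<in>UNIV - Z. \<Sum>v\<in>nbrs adj u. \<bar>hit_prob adj Z Y u - hit_prob adj Z Y v\<bar>)"
proof -
  have vertex_bound: "\<bar>rotor_error nxt (hit_prob adj Z Y) \<rho>0 u (m u)\<bar>
      \<le> (\<Sum>v\<in>nbrs adj u. \<bar>hit_prob adj Z Y u - hit_prob adj Z Y v\<bar>)"
    if "u \<in> UNIV - Z" for u
  proof (rule abs_rotor_error_le[OF assms(4)])
    obtain z where "z \<in> Z"
      using assms(3) by blast
    then have "nbrs adj u \<noteq> {}"
      using that connected_graph_nbrs_nonempty[OF graph, of u z] by auto
    then show "\<rho>0 u \<in> nbrs adj u"
      using rotors by blast
    show "hit_prob adj Z Y u = (\<Sum>v\<in>nbrs adj u. hit_prob adj Z Y v) / real (card (nbrs adj u))"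
      using that by (intro hit_prob_harmonic[OF assms(2)]) simp
  qed
  have "\<bar>\<Sum>u\<in>UNIV - Z. rotor_error nxt (hit_prob adj Z Y) \<rho>0 u (m u)\<bar>
      \<le> (\<Sum>u\<in>UNIV - Z. \<bar>rotor_error nxt (hit_prob adj Z Y) \<rho>0 u (m u)\<bar>)"
    by (rule sum_abs)
  also have "\<dots> \<le> (\<Sum>u\<in>UNIV - Z. \<Sum>v\<in>nbrs adj u. \<bar>hit_prob adj Z Y u - hit_prob adj Z Y v\<bar>)"
    by (rule sum_mono) (erule vertex_bound)
  finally show ?thesis .
qed

theorem proposition5p7:
  fixes adj :: "'a::finite \<Rightarrow> 'a \<Rightarrow> bool"
    and nxt :: "'a \<Rightarrow> 'a \<Rightarrow> 'a"
    and Y Z :: "'a set"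
    and s :: "'a \<Rightarrow> nat"
    and \<rho>0 \<rho>' :: "'a \<Rightarrow> 'a"
    and \<sigma>' :: "'a \<Rightarrow> nat"
  assumes "finite_connected_graph adj"
    and "Y \<subseteq> Z" and "Z \<noteq> {}"
    and "cyclic_orders adj nxt"
    and "\<forall>u. nbrs adj u \<noteq> {} \<longrightarrow> \<rho>0 u \<in> nbrs adj u"
    and "(rotor_step nxt Z)\<^sup>*\<^sup>* (\<rho>0, s) (\<rho>', \<sigma>')"
    and "\<forall>x. x \<notin> Z \<longrightarrow> \<sigma>' x = 0"
  shows "\<bar>real (\<Sum>y\<in>Y. \<sigma>' y) - H_walk adj Z s Y\<bar>
           \<le> (\<Sum>u\<in>UNIV - Z. \<Sum>v\<in>nbrs adj u.
                 \<bar>hit_prob adj Z Y u - hit_prob adj Z Y v\<bar>)"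
proof -
  let ?H = "hit_prob adj Z Y"
  from rotor_run_weighted_count[OF assms(6), of ?H]
  obtain m where "weighted_count ?H \<sigma>' = weighted_count ?H s + (\<Sum>u\<in>UNIV - Z. rotor_error nxt ?H \<rho>0 u (m u))"
    unfolding snd_conv by blast
  moreover have "weighted_count ?H \<sigma>' = real (\<Sum>y\<in>Y. \<sigma>' y)"
    using assms(7) by (rule weighted_count_hit_prob_absorbed)
  moreover have "weighted_count ?H s = H_walk adj Z s Y"
    unfolding H_walk_def weighted_count_def ..
  ultimately have "real (\<Sum>y\<in>Y. \<sigma>' y) - H_walk adj Z s Y = (\<Sum>u\<in>UNIV - Z. rotor_error nxt ?H \<rho>0 u (m u))"
    by simp
  with abs_sum_rotor_error_le[OF assms(1-5)] show ?thesis
    by simp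
qed

end
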